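(* Consider an asynchronous message-passing system of $n$ processes with reliable point-to-point channels between every pair of processes, in which up to $t$ processes may crash, with $n>2t$. For every integer $k > \frac{n-t}{n-2t}$, there exists an algorithm solving $k$-set agreement in this system.
   Context: $k$-set agreement (decisions allowed in $V\cup\{\bot\}$, $\bot$ counting as a decided value): each process proposes an initial value from a set $V$; (Validity) if all correct processes propose the same value $v$, no correct process decides a value different from $v$; (Agreement) at most $k$ distinct values are decided by correct processes; (Termination) every correct process eventually decides. A crashed process stops taking steps; a correct process never crashes. Asynchronous: messages sent between correct processes are eventually received, with no bound on delays. *)

theory Defs
  imports Main Complex_Main
begin

text \<open>
Local states and message payloads are finite S-expressions built from
values of V (the type 'v), natural numbers and lists; every algorithm with
finitary local data can be encoded in this universal type.
\<close>

datatype 'v uexp = UVal 'v | UNat nat | UList "'v uexp list"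

text \<open>
An algorithm (deterministic, one automaton per process, parametrised by the
process identity):
  alg_init p v       : initial local state of process p proposing v;
  alg_trans p s r    : one atomic step of p in local state s, receiving r
                       (None = nothing received, Some (q, m) = payload m from q);
                       returns new state and a list of (destination, payload);
  alg_dec s          : None = undecided, Some None = decided bottom,
                       Some (Some v) = decided v.
\<close>

record 'v alg =
  alg_init  :: "nat \<Rightarrow> 'v \<Rightarrow> 'v uexp"
  alg_trans :: "nat \<Rightarrow> 'v uexp \<Rightarrow> (nat \<times> 'v uexp) option \<Rightarrow> 'v uexp \<times> (nat \<times> 'v uexp) list"
  alg_dec   :: "'v uexp \<Rightarrow> 'v option option"

text \<open>
A run: at global time i process sched i takes a step; rcv i is either None
(no message received) or Some (j, m), the m-th message sent at time j;
out i is the list of messages sent at time i; st i p is the local state of p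
before time i.
\<close>

definition msg_in ::
  "(nat \<Rightarrow> nat) \<Rightarrow> (nat \<Rightarrow> (nat \<times> nat) option) \<Rightarrow> (nat \<Rightarrow> (nat \<times> 'v uexp) list)
   \<Rightarrow> nat \<Rightarrow> (nat \<times> 'v uexp) option" where
  "msg_in sched rcv out i =
     (case rcv i of None \<Rightarrow> None | Some (j, m) \<Rightarrow> Some (sched j, snd (out j ! m)))"

definition is_run ::
  "'v alg \<Rightarrow> nat \<Rightarrow> nat set \<Rightarrow> (nat \<Rightarrow> 'v) \<Rightarrow> (nat \<Rightarrow> nat)
   \<Rightarrow> (nat \<Rightarrow> (nat \<times> nat) option) \<Rightarrow> (nat \<Rightarrow> (nat \<times> 'v uexp) list)
   \<Rightarrow> (nat \<Rightarrow> nat \<Rightarrow> 'v uexp) \<Rightarrow> bool" where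
  "is_run A n F inp sched rcv out st \<longleftrightarrow>
     F \<subseteq> {..<n} \<and>
     (\<forall>p. st 0 p = alg_init A p (inp p)) \<and>
     (\<forall>i. sched i < n) \<and>
     (\<forall>i. alg_trans A (sched i) (st i (sched i)) (msg_in sched rcv out i)
            = (st (Suc i) (sched i), out i)) \<and>
     (\<forall>i q. q \<noteq> sched i \<longrightarrow> st (Suc i) q = st i q) \<and>
     (\<forall>i j m. rcv i = Some (j, m) \<longrightarrow>
            j < i \<and> m < length (out j) \<and> fst (out j ! m) = sched i) \<and>
     (\<forall>i i' x. rcv i = Some x \<longrightarrow> rcv i' = Some x \<longrightarrow> i = i') \<and>
     (\<forall>p\<in>F. \<exists>T. \<forall>i\<ge>T. sched i \<noteq> p) \<and>
     (\<forall>p\<in>{..<n} - F. \<forall>T. \<exists>i\<ge>T. sched i = p) \<and>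
     (\<forall>j m. m < length (out j) \<longrightarrow> sched j \<notin> F \<longrightarrow>
            fst (out j ! m) \<in> {..<n} - F \<longrightarrow> (\<exists>i. rcv i = Some (j, m)))"

definition decides :: "'v alg \<Rightarrow> (nat \<Rightarrow> nat \<Rightarrow> 'v uexp) \<Rightarrow> nat \<Rightarrow> 'v option \<Rightarrow> bool" where
  "decides A st p d \<longleftrightarrow> (\<exists>i. alg_dec A (st i p) = Some d)"

text \<open>A solves k-set agreement in the system with n processes, up to t crashes
(decisions in V \<union> {bottom}, encoded as 'v option with None = bottom).
Decisions are irrevocable.\<close>

definition solves_kset :: "'v alg \<Rightarrow> nat \<Rightarrow> nat \<Rightarrow> nat \<Rightarrow> bool" where
  "solves_kset A n t k \<longleftrightarrow>
     (\<forall>F inp sched rcv out st. card F \<le> t \<longrightarrow> is_run A n F inp sched rcv out st \<longrightarrow>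
        (let C = {..<n} - F in
          (\<forall>p<n. \<forall>i i' d. i \<le> i' \<longrightarrow> alg_dec A (st i p) = Some d \<longrightarrow>
                 alg_dec A (st i' p) = Some d) \<and>
          (\<forall>v. (\<forall>p\<in>C. inp p = v) \<longrightarrow>
                 (\<forall>p\<in>C. \<forall>d. decides A st p d \<longrightarrow> d = Some v)) \<and>
          (finite {d. \<exists>p\<in>C. decides A st p d} \<and> card {d. \<exists>p\<in>C. decides A st p d} \<le> k) \<and>
          (\<forall>p\<in>C. \<exists>d. decides A st p d)))"

end

theory Submission
  imports Defs
begin

text \<open>
Each process keeps a view, the set of pairs (q, input of q) it has learned so far. In every
step it adds its own pair and the view it received, rebroadcasts its view whenever it grew,
and records the views reported by the others. It decides as soon as n - t processes have
reported exactly its current view V: its own input if at most t pairs of V carry another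
value, and bottom otherwise.

Two sets of n - t reporters intersect because n > 2t, and the views of one process only
grow, so the views underlying decisions form a chain. Its least element T has at least
n - t pairs, and every decided value w is carried by all but t of them; hence at most
|T| / (|T| - t) \<le> (n - t) / (n - 2t) < k values other than bottom are decided. Validity
holds because a pair carrying a value other than the common input belongs to a crashed
process; termination because views stabilise and the final views of the correct
processes, being delivered to each other, coincide.
\<close>

lemma card_mult_le_if_few_dissenters:
  assumes "finite T" and few: "\<forall>w\<in>W. card {x \<in> T. f x \<noteq> w} \<le> t"
  shows "card W * (card T - t) \<le> card T"
proof (cases "finite W")
  case True
  let ?fibre = "\<lambda>w. {x \<in> T. f x = w}"
  have "card T - t \<le> card (?fibre w)" if "w \<in> W" for w
  proof -
    have "?fibre w = T - {x \<in> T. f x \<noteq> w}" by blast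
    then have "card (?fibre w) = card T - card {x \<in> T. f x \<noteq> w}"
      using \<open>finite T\<close> by (simp add: card_Diff_subset)
    then show ?thesis using few that by fastforce
  qed
  then have "card W * (card T - t) \<le> (\<Sum>w\<in>W. card (?fibre w))"
    using sum_mono[of W "\<lambda>_. card T - t"] by simp
  also have "\<dots> = card (\<Union>w\<in>W. ?fibre w)"
    using True \<open>finite T\<close> by (intro card_UN_disjoint[symmetric]) auto
  also have "\<dots> \<le> card T"
    using \<open>finite T\<close> by (intro card_mono) auto
  finally show ?thesis .
qed simp

lemma mult_le_imp_le_ratio:
  fixes j s n t :: nat
  assumes "j * (s - t) \<le> s" and "n - t \<le> s" and "2 * t < n"
  shows "real j \<le> real (n - t) / real (n - 2 * t)"
proof -
  obtain e where s: "s = (n - t) + e"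
    using assms(2) le_Suc_ex by blast
  then have "j * (n - 2 * t) + j * e \<le> (n - t) + e"
    using assms(1,3) by (simp add: algebra_simps)
  moreover have "j = 0 \<or> e \<le> j * e"
    by (cases j) auto
  ultimately have "j * (n - 2 * t) \<le> n - t"
    by (elim disjE) (simp, linarith)
  then have "real j * real (n - 2 * t) \<le> real (n - t)"
    by (metis of_nat_le_iff of_nat_mult)
  then show ?thesis
    using assms(3) by (simp add: field_simps)
qed

lemma mono_finite_Union_eventually_eq:
  fixes f :: "nat \<Rightarrow> 'a set"
  assumes "mono f" and "finite (\<Union>(range f))"
  shows "\<exists>N. \<forall>i\<ge>N. f i = \<Union>(range f)"
proof -
  have "f i \<subseteq> f j \<or> f j \<subseteq> f i" for i j
    by (metis nat_le_linear monoD[OF assms(1)])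
  then have "subset.chain UNIV (range f)"
    by (auto simp: subset_chain_def)
  then obtain N where "\<Union>(range f) \<subseteq> f N"
    using finite_subset_Union_chain[OF assms(2)] by blast
  then have "f i = \<Union>(range f)" if "N \<le> i" for i
    using monoD[OF assms(1) that] by blast
  then show ?thesis by blast
qed

datatype 'v lstate = LState
  (proposal: 'v) (view: "(nat \<times> 'v) list")
  (reports: "(nat \<times> (nat \<times> 'v) list) list") (decision: "'v option option")

fun enc_pair :: "nat \<times> 'v \<Rightarrow> 'v uexp" where
  "enc_pair (q, v) = UList [UNat q, UVal v]"

fun dec_pair :: "'v uexp \<Rightarrow> (nat \<times> 'v) list" where
  "dec_pair (UList [UNat q, UVal v]) = [(q, v)]"
| "dec_pair _ = []"

definition enc_view :: "(nat \<times> 'v) list \<Rightarrow> 'v uexp" where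
  "enc_view w = UList (map enc_pair w)"

fun dec_view :: "'v uexp \<Rightarrow> (nat \<times> 'v) list" where
  "dec_view (UList xs) = concat (map dec_pair xs)"
| "dec_view _ = []"

lemma dec_enc_view [simp]: "dec_view (enc_view w) = w"
  unfolding enc_view_def by (induction w) auto

fun enc_report :: "nat \<times> (nat \<times> 'v) list \<Rightarrow> 'v uexp" where
  "enc_report (q, w) = UList [UNat q, enc_view w]"

fun dec_report :: "'v uexp \<Rightarrow> (nat \<times> (nat \<times> 'v) list) list" where
  "dec_report (UList [UNat q, w]) = [(q, dec_view w)]"
| "dec_report _ = []"

definition enc_reports :: "(nat \<times> (nat \<times> 'v) list) list \<Rightarrow> 'v uexp" where
  "enc_reports rs = UList (map enc_report rs)"

fun dec_reports :: "'v uexp \<Rightarrow> (nat \<times> (nat \<times> 'v) list) list" where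
  "dec_reports (UList xs) = concat (map dec_report xs)"
| "dec_reports _ = []"

lemma dec_enc_reports [simp]: "dec_reports (enc_reports rs) = rs"
  unfolding enc_reports_def by (induction rs) auto

fun enc_decision :: "'v option option \<Rightarrow> 'v uexp" where
  "enc_decision None = UList []"
| "enc_decision (Some None) = UNat 0"
| "enc_decision (Some (Some v)) = UVal v"

fun dec_decision :: "'v uexp \<Rightarrow> 'v option option" where
  "dec_decision (UList _) = None"
| "dec_decision (UNat _) = Some None"
| "dec_decision (UVal v) = Some (Some v)"

lemma dec_enc_decision [simp]: "dec_decision (enc_decision d) = d"
  by (cases d rule: enc_decision.cases) auto

fun enc_state :: "'v lstate \<Rightarrow> 'v uexp" where
  "enc_state (LState v w rs d) = UList [UVal v, enc_view w, enc_reports rs, enc_decision d]"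

fun dec_state :: "'v uexp \<Rightarrow> 'v lstate" where
  "dec_state (UList [UVal v, w, rs, d]) =
     LState v (dec_view w) (dec_reports rs) (dec_decision d)"
| "dec_state _ = LState undefined [] [] None"

lemma dec_enc_state [simp]: "dec_state (enc_state s) = s"
  by (cases s) auto

definition reporters :: "(nat \<times> (nat \<times> 'v) list) list \<Rightarrow> (nat \<times> 'v) set \<Rightarrow> nat set" where
  "reporters rs V = {q. \<exists>w. (q, w) \<in> set rs \<and> set w = V}"

lemma finite_reporters: "finite (reporters rs V)"
  by (rule finite_subset[of _ "fst ` set rs"]) (force simp: reporters_def, simp)

definition decision_value :: "nat \<Rightarrow> 'v \<Rightarrow> (nat \<times> 'v) set \<Rightarrow> 'v option" where
  "decision_value t v V = (if card {y \<in> V. snd y \<noteq> v} \<le> t then Some v else None)"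

definition step :: "nat \<Rightarrow> nat \<Rightarrow> nat \<Rightarrow> 'v lstate \<Rightarrow> (nat \<times> (nat \<times> 'v) list) option
    \<Rightarrow> 'v lstate \<times> (nat \<times> (nat \<times> 'v) list) list" where
  "step n t p s m =
    (let w = (p, proposal s) # (case m of None \<Rightarrow> [] | Some (_, w') \<Rightarrow> w') @ view s;
         rs = (case m of None \<Rightarrow> reports s | Some r \<Rightarrow> r # reports s);
         d = (if decision s = None \<and> n - t \<le> card (reporters rs (set w))
              then Some (decision_value t (proposal s) (set w)) else decision s)
     in (LState (proposal s) w rs d,
         if set w = set (view s) then [] else map (\<lambda>q. (q, w)) [0..<n]))"

definition alg :: "nat \<Rightarrow> nat \<Rightarrow> 'v alg" where
  "alg n t =
    \<lparr>alg_init = (\<lambda>p v. enc_state (LState v [] [] None)),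
     alg_trans = (\<lambda>p s m. map_prod enc_state (map (apsnd enc_view))
                   (step n t p (dec_state s) (map_option (apsnd dec_view) m))),
     alg_dec = decision \<circ> dec_state\<rparr>"

locale alg_run =
  fixes n t :: nat and F :: "nat set" and inp :: "nat \<Rightarrow> 'v" and sched :: "nat \<Rightarrow> nat"
    and rcv :: "nat \<Rightarrow> (nat \<times> nat) option" and out :: "nat \<Rightarrow> (nat \<times> 'v uexp) list"
    and st :: "nat \<Rightarrow> nat \<Rightarrow> 'v uexp"
  assumes run: "is_run (alg n t) n F inp sched rcv out st"
begin

definition ls :: "nat \<Rightarrow> nat \<Rightarrow> 'v lstate" where
  "ls i p = dec_state (st i p)"

definition received :: "nat \<Rightarrow> (nat \<times> (nat \<times> 'v) list) option" where
  "received i = map_option (apsnd dec_view) (msg_in sched rcv out i)"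

lemma ls_0: "ls 0 p = LState (inp p) [] [] None"
  using run unfolding is_run_def ls_def alg_def by simp

lemma ls_Suc_sched: "ls (Suc i) (sched i) = fst (step n t (sched i) (ls i (sched i)) (received i))"
  and out_step: "out i = map (apsnd enc_view) (snd (step n t (sched i) (ls i (sched i)) (received i)))"
proof -
  let ?s = "step n t (sched i) (ls i (sched i)) (received i)"
  have "alg_trans (alg n t) (sched i) (st i (sched i)) (msg_in sched rcv out i)
      = (st (Suc i) (sched i), out i)"
    using run unfolding is_run_def by blast
  then have "map_prod enc_state (map (apsnd enc_view)) ?s = (st (Suc i) (sched i), out i)"
    by (simp add: alg_def ls_def received_def)
  then have "enc_state (fst ?s) = st (Suc i) (sched i)" and "map (apsnd enc_view) (snd ?s) = out i"
    by (metis fst_map_prod fst_conv, metis snd_map_prod snd_conv)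
  then show "ls (Suc i) (sched i) = fst ?s" and "out i = map (apsnd enc_view) (snd ?s)"
    unfolding ls_def by (metis dec_enc_state, simp)
qed

lemma ls_Suc_other: "q \<noteq> sched i \<Longrightarrow> ls (Suc i) q = ls i q"
  using run unfolding is_run_def ls_def by simp

lemma sched_less: "sched i < n"
  using run unfolding is_run_def by blast

lemma rcv_Some:
  "rcv i = Some (j, m) \<Longrightarrow> j < i \<and> m < length (out j) \<and> fst (out j ! m) = sched i"
  using run unfolding is_run_def by blast

lemma reliable_delivery:
  "m < length (out j) \<Longrightarrow> sched j \<notin> F \<Longrightarrow> fst (out j ! m) \<in> {..<n} - F \<Longrightarrow>
   \<exists>i. rcv i = Some (j, m)"
  using run unfolding is_run_def by blast

lemma alg_dec_st: "alg_dec (alg n t) (st i p) = decision (ls i p)"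
  by (simp add: alg_def ls_def)

lemma decides_iff: "decides (alg n t) st p d \<longleftrightarrow> (\<exists>i. decision (ls i p) = Some d)"
  by (simp add: decides_def alg_dec_st)

lemma proposal_ls [simp]: "proposal (ls i p) = inp p"
proof (induction i)
  case (Suc i)
  then show ?case
    by (cases "p = sched i") (simp_all add: ls_Suc_sched ls_Suc_other step_def Let_def)
qed (simp add: ls_0)

definition view_set :: "nat \<Rightarrow> nat \<Rightarrow> (nat \<times> 'v) set" where
  "view_set i p = set (view (ls i p))"

definition report_set :: "nat \<Rightarrow> nat \<Rightarrow> (nat \<times> (nat \<times> 'v) list) set" where
  "report_set i p = set (reports (ls i p))"

lemma view_set_0: "view_set 0 p = {}"
  by (simp add: view_set_def ls_0)

lemma view_set_Suc_sched:
  "view_set (Suc i) (sched i) = insert (sched i, inp (sched i))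
     (view_set i (sched i) \<union> (case received i of None \<Rightarrow> {} | Some (_, w) \<Rightarrow> set w))"
  by (auto simp: view_set_def ls_Suc_sched step_def Let_def split: option.splits)

lemma view_set_Suc_other: "q \<noteq> sched i \<Longrightarrow> view_set (Suc i) q = view_set i q"
  by (simp add: view_set_def ls_Suc_other)

lemma view_set_Suc_mono: "view_set i p \<subseteq> view_set (Suc i) p"
  by (cases "p = sched i") (auto simp: view_set_Suc_sched view_set_Suc_other)

lemma view_set_mono: "i \<le> j \<Longrightarrow> view_set i p \<subseteq> view_set j p"
  by (rule lift_Suc_mono_le[of "\<lambda>i. view_set i p", OF view_set_Suc_mono])

lemma report_set_Suc_sched: "report_set (Suc i) (sched i) = set_option (received i) \<union> report_set i (sched i)"
  by (auto simp: report_set_def ls_Suc_sched step_def Let_def split: option.splits)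

lemma report_set_Suc_other: "q \<noteq> sched i \<Longrightarrow> report_set (Suc i) q = report_set i q"
  by (simp add: report_set_def ls_Suc_other)

lemma report_set_mono: "i \<le> j \<Longrightarrow> report_set i p \<subseteq> report_set j p"
  by (rule lift_Suc_mono_le[of "\<lambda>i. report_set i p"])
    (metis Un_upper2 order_refl report_set_Suc_sched report_set_Suc_other)

lemma out_eq:
  "out i = (if view_set (Suc i) (sched i) = view_set i (sched i) then []
            else map (\<lambda>q. (q, enc_view (view (ls (Suc i) (sched i))))) [0..<n])"
  by (simp add: out_step view_set_def ls_Suc_sched step_def Let_def)

lemma decision_Suc_sched:
  "decision (ls (Suc i) (sched i)) =
    (if decision (ls i (sched i)) = None \<and>
        n - t \<le> card (reporters (reports (ls (Suc i) (sched i))) (view_set (Suc i) (sched i)))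
     then Some (decision_value t (inp (sched i)) (view_set (Suc i) (sched i)))
     else decision (ls i (sched i)))"
  by (simp add: view_set_def ls_Suc_sched step_def Let_def)

lemma decision_persists:
  assumes "decision (ls i p) = Some d" and "i \<le> j"
  shows "decision (ls j p) = Some d"
  using assms(2,1)
proof (induction j rule: dec_induct)
  case (step j)
  then show ?case
    by (cases "p = sched j") (auto simp: decision_Suc_sched ls_Suc_other)
qed

lemma received_Some:
  assumes "received i = Some (q, w)"
  shows "\<exists>j<i. q = sched j \<and> w = view (ls (Suc j) q)"
proof -
  obtain j m where rcv: "rcv i = Some (j, m)" and "q = sched j" and w: "w = dec_view (snd (out j ! m))"
    using assms unfolding received_def msg_in_def by (auto split: option.splits)
  moreover have "j < i" and "m < length (out j)"
    using rcv_Some[OF rcv] by blast+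
  moreover from this(2) have "out j ! m = (m, enc_view (view (ls (Suc j) (sched j))))"
    by (auto simp: out_eq[of j] split: if_splits)
  ultimately show ?thesis by auto
qed

definition input_pairs :: "(nat \<times> 'v) set" where
  "input_pairs = (\<lambda>q. (q, inp q)) ` {..<n}"

lemma finite_input_pairs: "finite input_pairs"
  by (simp add: input_pairs_def)

lemma view_set_subset_input_pairs: "view_set i p \<subseteq> input_pairs"
proof (induction i arbitrary: p rule: less_induct)
  case (less i)
  show ?case
  proof (cases i)
    case (Suc j)
    have "set w \<subseteq> input_pairs" if "received j = Some (q, w)" for q w
      using received_Some[OF that] less.IH Suc by (auto simp: view_set_def)
    then show ?thesis
      using less.IH[of j] Suc sched_less
      by (cases "p = sched j")
        (auto simp: view_set_Suc_sched view_set_Suc_other input_pairs_def split: option.splits)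
  qed (simp add: view_set_0)
qed

lemma report_set_sent:
  "(q, w) \<in> report_set i p \<Longrightarrow> \<exists>j. q = sched j \<and> set w = view_set (Suc j) q"
proof (induction i arbitrary: p)
  case (Suc i)
  then show ?case
    using received_Some[of i q w] unfolding view_set_def
    by (cases "p = sched i") (auto simp: report_set_Suc_sched report_set_Suc_other)
qed (simp add: report_set_def ls_0)

text \<open>The view is taken right after a step of q, so that it contains (q, inp q).\<close>

definition quorum_view :: "(nat \<times> 'v) set \<Rightarrow> bool" where
  "quorum_view V \<longleftrightarrow>
     (\<exists>Q \<subseteq> {..<n}. n - t \<le> card Q \<and> (\<forall>q\<in>Q. \<exists>j. sched j = q \<and> view_set (Suc j) q = V))"

lemma decision_quorum_view:
  "decision (ls i p) = Some d \<Longrightarrow> \<exists>V. quorum_view V \<and> d = decision_value t (inp p) V"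
proof (induction i)
  case (Suc i)
  show ?case
  proof (cases "p = sched i \<and> decision (ls i p) = None")
    case True
    let ?V = "view_set (Suc i) p"
    let ?Q = "reporters (reports (ls (Suc i) p)) ?V"
    have d: "d = decision_value t (inp p) ?V" and "n - t \<le> card ?Q"
      using Suc.prems True decision_Suc_sched[of i] by (auto split: if_splits)
    moreover have "\<exists>j. sched j = q \<and> view_set (Suc j) q = ?V" if "q \<in> ?Q" for q
      using that report_set_sent[of q _ "Suc i" p]
      unfolding reporters_def report_set_def by fastforce
    ultimately have "quorum_view ?V"
      unfolding quorum_view_def using sched_less by blast
    with d show ?thesis by blast
  next
    case False
    then have "decision (ls i p) = Some d"
      using Suc.prems decision_Suc_sched[of i] ls_Suc_other[of p i]
      by (cases "p = sched i") (auto split: if_splits)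
    then show ?thesis using Suc.IH by blast
  qed
qed (simp add: ls_0)

definition final_view :: "nat \<Rightarrow> (nat \<times> 'v) set" where
  "final_view p = (\<Union>i. view_set i p)"

lemma final_view_reached: "\<exists>N. \<forall>i\<ge>N. view_set i p = final_view p"
proof -
  have "mono (\<lambda>i. view_set i p)"
    by (rule monoI) (rule view_set_mono)
  moreover have "final_view p \<subseteq> input_pairs"
    using view_set_subset_input_pairs unfolding final_view_def by blast
  then have "finite (final_view p)"
    using finite_input_pairs by (rule finite_subset)
  ultimately show ?thesis
    unfolding final_view_def by (rule mono_finite_Union_eventually_eq)
qed

end

locale resilient_run = alg_run +
  assumes card_F: "card F \<le> t" and majority: "2 * t < n"
begin

abbreviation correct :: "nat set" where
  "correct \<equiv> {..<n} - F"

lemma finite_F: "finite F"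
  using run finite_subset unfolding is_run_def by blast

lemma card_correct: "n - t \<le> card correct"
  using run card_F finite_F by (simp add: is_run_def card_Diff_subset)

lemma quorum_view_witness:
  assumes "quorum_view V"
  obtains q j where "sched j = q" and "view_set (Suc j) q = V"
proof -
  obtain Q where "n - t \<le> card Q" and "\<forall>q\<in>Q. \<exists>j. sched j = q \<and> view_set (Suc j) q = V"
    using assms unfolding quorum_view_def by blast
  moreover from this(1) have "Q \<noteq> {}"
    using majority by auto
  ultimately show thesis
    using that by blast
qed

lemma quorum_view_subset: "quorum_view V \<Longrightarrow> V \<subseteq> input_pairs"
  by (metis quorum_view_witness view_set_subset_input_pairs)

lemma finite_quorum_view: "quorum_view V \<Longrightarrow> finite V"
  using quorum_view_subset finite_input_pairs by (rule finite_subset)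

lemma card_quorum_view:
  assumes "quorum_view V"
  shows "n - t \<le> card V"
proof -
  obtain Q where Q: "n - t \<le> card Q" and views: "\<forall>q\<in>Q. \<exists>j. sched j = q \<and> view_set (Suc j) q = V"
    using assms unfolding quorum_view_def by blast
  have "Q \<subseteq> fst ` V"
    using views view_set_Suc_sched by force
  then have "card Q \<le> card V"
    using finite_quorum_view[OF assms] by (meson card_image_le card_mono finite_imageI le_trans)
  with Q show ?thesis by simp
qed

lemma quorum_views_chain:
  assumes "quorum_view V" and "quorum_view V'"
  shows "V \<subseteq> V' \<or> V' \<subseteq> V"
proof -
  obtain Q Q' where Q: "Q \<subseteq> {..<n}" "n - t \<le> card Q" "\<forall>q\<in>Q. \<exists>j. sched j = q \<and> view_set (Suc j) q = V"
    and Q': "Q' \<subseteq> {..<n}" "n - t \<le> card Q'" "\<forall>q\<in>Q'. \<exists>j. sched j = q \<and> view_set (Suc j) q = V'"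
    using assms unfolding quorum_view_def by blast
  have "card Q + card Q' = card (Q \<union> Q') + card (Q \<inter> Q')"
    using Q(1) Q'(1) finite_subset by (metis card_Un_Int finite_lessThan)
  moreover have "card (Q \<union> Q') \<le> n"
    using Q(1) Q'(1) by (metis Un_subset_iff card_lessThan card_mono finite_lessThan)
  ultimately have "Q \<inter> Q' \<noteq> {}"
    using Q(2) Q'(2) majority by auto
  then obtain q j j' where "view_set (Suc j) q = V" and "view_set (Suc j') q = V'"
    using Q(3) Q'(3) by blast
  then show ?thesis
    using view_set_mono nat_le_linear by metis
qed

lemma least_quorum_view:
  assumes "quorum_view V"
  shows "quorum_view (\<Inter>(Collect quorum_view))"
proof -
  have "Collect quorum_view \<subseteq> Pow input_pairs"
    using quorum_view_subset by blast
  then have "finite (Collect quorum_view)"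
    using finite_input_pairs by (simp add: finite_subset)
  moreover have "subset.chain UNIV (Collect quorum_view)"
    using quorum_views_chain by (auto simp: subset_chain_def)
  ultimately show ?thesis
    using Inter_in_chain assms by blast
qed

lemma few_dissenters_if_unanimous:
  assumes "V \<subseteq> input_pairs" and "\<forall>q\<in>correct. inp q = v"
  shows "card {y \<in> V. snd y \<noteq> v} \<le> t"
proof -
  have "{y \<in> V. snd y \<noteq> v} \<subseteq> (\<lambda>q. (q, inp q)) ` F"
  proof
    fix y assume "y \<in> {y \<in> V. snd y \<noteq> v}"
    then obtain q where "q < n" and "y = (q, inp q)" and "inp q \<noteq> v"
      using assms(1) unfolding input_pairs_def by auto
    then show "y \<in> (\<lambda>q. (q, inp q)) ` F"
      using assms(2) by blast
  qed
  then have "card {y \<in> V. snd y \<noteq> v} \<le> card F"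
    using finite_F by (meson card_image_le card_mono finite_imageI le_trans)
  with card_F show ?thesis by simp
qed

lemma validity:
  assumes "\<forall>q\<in>correct. inp q = v" and "p \<in> correct" and "decision (ls i p) = Some d"
  shows "d = Some v"
proof -
  obtain V where "quorum_view V" and "d = decision_value t (inp p) V"
    using decision_quorum_view[OF assms(3)] by blast
  then show ?thesis
    using assms(1,2) few_dissenters_if_unanimous[OF quorum_view_subset]
    by (simp add: decision_value_def)
qed

lemma card_decided_values:
  defines "W \<equiv> {w. \<exists>p i. decision (ls i p) = Some (Some w)}"
  shows "finite W \<and> real (card W) \<le> real (n - t) / real (n - 2 * t)"
proof -
  have dissent: "\<exists>V. quorum_view V \<and> card {y \<in> V. snd y \<noteq> w} \<le> t" if "w \<in> W" for w
    using that decision_quorum_view unfolding W_def decision_value_def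
    by (fastforce split: if_splits)
  show "finite W \<and> real (card W) \<le> real (n - t) / real (n - 2 * t)"
  proof (cases "W = {}")
    case False
    define T where "T = \<Inter>(Collect quorum_view)"
    have T: "quorum_view T"
      using False dissent least_quorum_view unfolding T_def by blast
    then have "finite T" and "n - t \<le> card T"
      by (simp_all add: finite_quorum_view card_quorum_view)
    have few: "\<forall>w\<in>W. card {y \<in> T. snd y \<noteq> w} \<le> t"
    proof
      fix w assume "w \<in> W"
      then obtain V where "quorum_view V" and "card {y \<in> V. snd y \<noteq> w} \<le> t"
        using dissent by blast
      moreover from this(1) have "card {y \<in> T. snd y \<noteq> w} \<le> card {y \<in> V. snd y \<noteq> w}"
        using finite_quorum_view unfolding T_def by (intro card_mono) auto
      ultimately show "card {y \<in> T. snd y \<noteq> w} \<le> t" by simp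
    qed
    have "W \<subseteq> snd ` T"
    proof
      fix w assume "w \<in> W"
      show "w \<in> snd ` T"
      proof (rule ccontr)
        assume "w \<notin> snd ` T"
        then have "{y \<in> T. snd y \<noteq> w} = T" by force
        then show False
          using few \<open>w \<in> W\<close> \<open>n - t \<le> card T\<close> majority by fastforce
      qed
    qed
    then have "finite W"
      using \<open>finite T\<close> finite_surj by blast
    moreover have "real (card W) \<le> real (n - t) / real (n - 2 * t)"
      using card_mult_le_if_few_dissenters[OF \<open>finite T\<close> few] \<open>n - t \<le> card T\<close> majority
      by (rule mult_le_imp_le_ratio)
    ultimately show ?thesis ..
  qed simp
qed

lemma agreement:
  assumes "real (n - t) / real (n - 2 * t) < real k"
  shows "finite {d. \<exists>p. decides (alg n t) st p d} \<and> card {d. \<exists>p. decides (alg n t) st p d} \<le> k"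
proof -
  define W where "W = {w. \<exists>p i. decision (ls i p) = Some (Some w)}"
  have sub: "{d. \<exists>p. decides (alg n t) st p d} \<subseteq> insert None (Some ` W)"
    unfolding W_def decides_iff by (auto intro: option.exhaust)
  have "finite W" and "card W < k"
    using card_decided_values assms unfolding W_def by fastforce+
  then have "card (insert None (Some ` W)) \<le> k"
    by (simp add: card_insert_if card_image)
  then show ?thesis
    using sub \<open>finite W\<close> by (meson card_mono finite_imageI finite_insert finite_subset le_trans)
qed

lemma correct_scheduled: "p \<in> correct \<Longrightarrow> \<exists>i\<ge>T. sched i = p"
  using run unfolding is_run_def by blast

lemma final_view_broadcast:
  assumes "p \<in> correct"
  shows "\<exists>j. sched j = p \<and> view_set (Suc j) p = final_view p \<and>
           out j = map (\<lambda>q. (q, enc_view (view (ls (Suc j) p)))) [0..<n]"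
proof -
  obtain N where N: "\<forall>i\<ge>N. view_set i p = final_view p"
    using final_view_reached by blast
  obtain i where "N \<le> i" and "sched i = p"
    using correct_scheduled[OF assms] by blast
  then have "view_set (Suc i) p = final_view p" and "(p, inp p) \<in> view_set (Suc i) p"
    using N view_set_Suc_sched[of i] by auto
  then obtain j where "view_set j p \<noteq> final_view p" and "view_set (Suc j) p = final_view p"
    using ex_least_nat_less[of "\<lambda>j. view_set j p = final_view p" "Suc i"] view_set_0 by auto
  moreover from this have "sched j = p"
    using view_set_Suc_other by metis
  ultimately show ?thesis
    using out_eq[of j] by auto
qed

lemma final_view_delivered:
  assumes "p \<in> correct" and "q \<in> correct"
  shows "\<exists>i w. sched i = q \<and> received i = Some (p, w) \<and> set w = final_view p"
proof -
  obtain j where j: "sched j = p" "view_set (Suc j) p = final_view p"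
    and out: "out j = map (\<lambda>q. (q, enc_view (view (ls (Suc j) p)))) [0..<n]"
    using final_view_broadcast[OF assms(1)] by blast
  have msg: "out j ! q = (q, enc_view (view (ls (Suc j) p)))" and "q < length (out j)"
    using out assms(2) by auto
  then obtain i where rcv: "rcv i = Some (j, q)"
    using reliable_delivery[OF \<open>q < length (out j)\<close>] assms j(1) by auto
  then have "sched i = q"
    using rcv_Some msg by fastforce
  moreover have "received i = Some (p, view (ls (Suc j) p))"
    using rcv msg j(1) unfolding received_def msg_in_def by simp
  ultimately show ?thesis
    using j(2) unfolding view_set_def by blast
qed

lemma final_view_eq:
  assumes "p \<in> correct" and "q \<in> correct"
  shows "final_view p = final_view q"
proof -
  have "final_view p \<subseteq> final_view q" if pq: "p \<in> correct" "q \<in> correct" for p q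
  proof -
    obtain i w where "sched i = q" and "received i = Some (p, w)" and "set w = final_view p"
      using final_view_delivered[OF pq] by blast
    then have "final_view p \<subseteq> view_set (Suc i) q"
      using view_set_Suc_sched[of i] by auto
    then show ?thesis
      unfolding final_view_def by blast
  qed
  with assms show ?thesis by blast
qed

lemma correct_eventually_report:
  assumes "p \<in> correct"
  shows "\<exists>M. \<forall>i\<ge>M. sched i = p \<longrightarrow>
           correct \<subseteq> reporters (reports (ls (Suc i) p)) (view_set (Suc i) p)"
proof -
  obtain deliv where deliv: "\<forall>q\<in>correct. \<exists>w. sched (deliv q) = p \<and>
      received (deliv q) = Some (q, w) \<and> set w = final_view q"
    using final_view_delivered[OF _ assms] by metis
  obtain N where N: "\<forall>i\<ge>N. view_set i p = final_view p"
    using final_view_reached by blast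
  define M where "M = Max (insert N (deliv ` correct))"
  have "N \<le> M" and deliv_le: "\<forall>q\<in>correct. deliv q \<le> M"
    unfolding M_def by simp_all
  have "q \<in> reporters (reports (ls (Suc i) p)) (view_set (Suc i) p)"
    if "M \<le> i" and "sched i = p" and "q \<in> correct" for i q
  proof -
    obtain w where "sched (deliv q) = p" and "received (deliv q) = Some (q, w)"
      and "set w = final_view q"
      using deliv \<open>q \<in> correct\<close> by blast
    moreover have "deliv q \<le> M"
      using deliv_le \<open>q \<in> correct\<close> by blast
    then have "report_set (Suc (deliv q)) p \<subseteq> report_set (Suc i) p"
      using \<open>M \<le> i\<close> by (intro report_set_mono) simp
    moreover have "view_set (Suc i) p = final_view p"
      using N \<open>N \<le> M\<close> \<open>M \<le> i\<close> by simp
    ultimately show ?thesis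
      using report_set_Suc_sched[of "deliv q"] final_view_eq[OF \<open>q \<in> correct\<close> assms]
      unfolding reporters_def report_set_def by auto
  qed
  then show ?thesis by blast
qed

lemma correct_decides:
  assumes "p \<in> correct"
  shows "\<exists>d. decides (alg n t) st p d"
proof -
  obtain M where M: "\<forall>i\<ge>M. sched i = p \<longrightarrow>
      correct \<subseteq> reporters (reports (ls (Suc i) p)) (view_set (Suc i) p)"
    using correct_eventually_report[OF assms] by blast
  obtain i where "M \<le> i" and "sched i = p"
    using correct_scheduled[OF assms] by blast
  then have "correct \<subseteq> reporters (reports (ls (Suc i) p)) (view_set (Suc i) p)"
    using M by blast
  then have "n - t \<le> card (reporters (reports (ls (Suc i) p)) (view_set (Suc i) p))"
    using card_correct card_mono[OF finite_reporters] le_trans by blast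
  then have "decision (ls (Suc i) p) \<noteq> None"
    using decision_Suc_sched[of i] \<open>sched i = p\<close> by auto
  then show ?thesis
    unfolding decides_iff by blast
qed

end

lemma alg_solves_kset:
  assumes "2 * t < n" and "real (n - t) / real (n - 2 * t) < real k"
  shows "solves_kset (alg n t) n t k"
  unfolding solves_kset_def Let_def
proof (intro allI impI, goal_cases)
  case (1 F inp sched rcv out st)
  then interpret resilient_run n t F inp sched rcv out st
    using assms(1) by unfold_locales auto
  have decided: "{d. \<exists>p\<in>correct. decides (alg n t) st p d} \<subseteq> {d. \<exists>p. decides (alg n t) st p d}"
    by blast
  show ?case
  proof (intro conjI, goal_cases)
    case 1
    show ?case
      unfolding alg_dec_st using decision_persists by blast
  next
    case 2
    show ?case
      unfolding decides_iff using validity by blast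
  next
    case 3
    show ?case
      using agreement[OF assms(2)] decided by (meson finite_subset)
  next
    case 4
    show ?case
      using agreement[OF assms(2)] decided by (meson card_mono le_trans)
  next
    case 5
    show ?case
      using correct_decides by blast
  qed
qed

theorem theorem8:
  fixes n t k :: nat
  assumes "n > 2 * t"
    and "real k > real (n - t) / real (n - 2 * t)"
  shows "\<exists>A :: 'v alg. solves_kset A n t k"
  using alg_solves_kset assms by blast

end
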